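(* Let $X$ and $Y$ be jointly spacelike slices (i.e. $X\cup Y$ is spacelike). Then the presheaf $(X\vee Y)(-):\mathsf{Slice}^{op}\to\mathsf{Set}$ is representable (namely by the slice $X\cup Y$).
   Context: Fix a connected, time-orientable Lorentzian manifold $\mathcal{M}$ with a fixed time-orientation (no further causality assumptions). A causal curve is an equivalence class, up to monotone reparametrisation, of smooth regular paths $\mu:\iota\to\mathcal{M}$ ($\iota\subseteq\mathbb{R}$ an interval) whose tangent is everywhere timelike or null; it is future-directed if the tangent is everywhere future-directed. Write $x\prec y$ if $x=y$ or there is a future-directed causal curve from $x$ to $y$. A region $A\subseteq\mathcal{M}$ is spacelike if no two distinct points $x,y\in A$ satisfy $x\prec y$. A slice is a closed spacelike subset of $\mathcal{M}$; slices $X,Y$ are jointly spacelike if $X\cup Y$ is spacelike. For regions $A,B$, $\mathcal{C}[A,B]$ is the set of future-directed causal curves passing through $A$ and then $B$: for a representative path $\mu:\iota\to\mathcal{M}$, there exists $q\in\iota$ with $\mu(q)\in B$, and for every such $q$ there exists $p\le q$ with $\mu(p)\in A$. The category $\mathsf{Slice}$ has slices as objects, $\mathsf{Slice}(X,Y)=\mathcal{P}(\mathcal{C}[X,Y])$ (the powerset), composition $T\circ S:=T\cap S$, identities $1_X=\mathcal{C}[X,X]$. For slices $X,Y$, $(X\vee Y)(-)$ is the presheaf with $(X\vee Y)(Z):=\mathcal{P}(\mathcal{C}[Z,X]\cup\mathcal{C}[Z,Y])$ and $(X\vee Y)(U:Z'\to Z):C\mapsto C\cap U$. *)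

theory Defs
  imports "HOL-Analysis.Analysis"
begin

fun dderiv :: "'a set \<Rightarrow> ('a::real_normed_vector) list \<Rightarrow> ('a \<Rightarrow> 'b::real_normed_vector) \<Rightarrow> 'a \<Rightarrow> 'b" where
  "dderiv S [] f = f"
| "dderiv S (v # vs) f = (\<lambda>x. frechet_derivative (dderiv S vs f) (at x within S) v)"

text \<open>f is smooth on S: all iterated derivatives exist (hence are continuous) on S.\<close>
definition smooth_on :: "'a set \<Rightarrow> ('a::real_normed_vector \<Rightarrow> 'b::real_normed_vector) \<Rightarrow> bool" where
  "smooth_on S f \<longleftrightarrow> (\<forall>vs. \<forall>x\<in>S. dderiv S vs f differentiable (at x within S))"

type_synonym ('p, 'n) chart = "'p set \<times> ('p \<Rightarrow> real ^ 'n)"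

definition trans_map :: "('p, 'n) chart \<Rightarrow> ('p, 'n) chart \<Rightarrow> real ^ 'n \<Rightarrow> real ^ 'n" where
  "trans_map c d = snd d \<circ> inv_into (fst c) (snd c)"

definition smooth_atlas :: "('p::topological_space, 'n::finite) chart set \<Rightarrow> bool" where
  "smooth_atlas A \<longleftrightarrow>
     (\<Union>(fst ` A) = UNIV) \<and>
     (\<forall>(U, \<phi>)\<in>A. open U \<and> open (\<phi> ` U) \<and> (\<exists>\<psi>. homeomorphism U (\<phi> ` U) \<phi> \<psi>)) \<and>
     (\<forall>c\<in>A. \<forall>d\<in>A. smooth_on (snd c ` (fst c \<inter> fst d)) (trans_map c d))"

text \<open>A symmetric bilinear form of Lorentzian signature (-,+,...,+): it admits an
  orthonormal basis with exactly one negative vector.\<close>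
definition lorentzian_form :: "(real ^ 'n \<Rightarrow> real ^ 'n \<Rightarrow> real) \<Rightarrow> bool" where
  "lorentzian_form B \<longleftrightarrow> bilinear B \<and> (\<forall>u v. B u v = B v u) \<and>
     (\<exists>(e :: 'n \<Rightarrow> real ^ 'n) i0. span (range e) = UNIV \<and>
        (\<forall>i j. i \<noteq> j \<longrightarrow> B (e i) (e j) = 0) \<and> B (e i0) (e i0) = -1 \<and>
        (\<forall>i. i \<noteq> i0 \<longrightarrow> B (e i) (e i) = 1))"

text \<open>g c x u v: the metric at the point with coordinates x in chart c, applied to
  coordinate vectors u, v.  T c x: the coordinate expression of the time-orientation
  vector field in chart c.\<close>
definition time_oriented_lorentzian ::
  "('p::topological_space, 'n::finite) chart set
   \<Rightarrow> (('p, 'n) chart \<Rightarrow> real ^ 'n \<Rightarrow> real ^ 'n \<Rightarrow> real ^ 'n \<Rightarrow> real)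
   \<Rightarrow> (('p, 'n) chart \<Rightarrow> real ^ 'n \<Rightarrow> real ^ 'n) \<Rightarrow> bool" where
  "time_oriented_lorentzian A g T \<longleftrightarrow>
     smooth_atlas A \<and> connected (UNIV :: 'p set) \<and>
     (\<forall>c\<in>A. \<forall>x\<in>snd c ` fst c. lorentzian_form (g c x)) \<and>
     (\<forall>c\<in>A. \<forall>u v. smooth_on (snd c ` fst c) (\<lambda>x. g c x u v)) \<and>
     (\<forall>c\<in>A. \<forall>d\<in>A. \<forall>p\<in>fst c \<inter> fst d. \<forall>u v.
        g c (snd c p) u v =
        g d (snd d p) (frechet_derivative (trans_map c d) (at (snd c p)) u)
                      (frechet_derivative (trans_map c d) (at (snd c p)) v)) \<and>
     (\<forall>c\<in>A. continuous_on (snd c ` fst c) (T c) \<and>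
        (\<forall>x\<in>snd c ` fst c. g c x (T c x) (T c x) < 0)) \<and>
     (\<forall>c\<in>A. \<forall>d\<in>A. \<forall>p\<in>fst c \<inter> fst d.
        T d (snd d p) = frechet_derivative (trans_map c d) (at (snd c p)) (T c (snd c p)))"

definition smooth_path :: "('p::topological_space, 'n::finite) chart set \<Rightarrow> real set \<Rightarrow> (real \<Rightarrow> 'p) \<Rightarrow> bool" where
  "smooth_path A \<iota> \<mu> \<longleftrightarrow> is_interval \<iota> \<and> interior \<iota> \<noteq> {} \<and> continuous_on \<iota> \<mu> \<and>
     (\<forall>c\<in>A. smooth_on {t\<in>\<iota>. \<mu> t \<in> fst c} (snd c \<circ> \<mu>))"

definition velocity :: "('p, 'n) chart \<Rightarrow> real set \<Rightarrow> (real \<Rightarrow> 'p) \<Rightarrow> real \<Rightarrow> real ^ 'n" where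
  "velocity c \<iota> \<mu> t = vector_derivative (snd c \<circ> \<mu>) (at t within {s\<in>\<iota>. \<mu> s \<in> fst c})"

text \<open>Smooth regular path whose tangent is everywhere causal (timelike or null) and
  future-directed.\<close>
definition fd_causal_path ::
  "('p::topological_space, 'n::finite) chart set
   \<Rightarrow> (('p, 'n) chart \<Rightarrow> real ^ 'n \<Rightarrow> real ^ 'n \<Rightarrow> real ^ 'n \<Rightarrow> real)
   \<Rightarrow> (('p, 'n) chart \<Rightarrow> real ^ 'n \<Rightarrow> real ^ 'n) \<Rightarrow> real set \<Rightarrow> (real \<Rightarrow> 'p) \<Rightarrow> bool" where
  "fd_causal_path A g T \<iota> \<mu> \<longleftrightarrow> smooth_path A \<iota> \<mu> \<and>
     (\<forall>t\<in>\<iota>. \<forall>c\<in>A. \<mu> t \<in> fst c \<longrightarrow>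
        (let x = snd c (\<mu> t); v = velocity c \<iota> \<mu> t in
           v \<noteq> 0 \<and> g c x v v \<le> 0 \<and> g c x (T c x) v < 0))"

definition reparam :: "real set \<Rightarrow> (real \<Rightarrow> 'p) \<Rightarrow> real set \<Rightarrow> (real \<Rightarrow> 'p) \<Rightarrow> bool" where
  "reparam \<kappa> \<nu> \<iota> \<mu> \<longleftrightarrow> is_interval \<kappa> \<and>
     (\<exists>h. bij_betw h \<kappa> \<iota> \<and> strict_mono_on \<kappa> h \<and> smooth_on \<kappa> h \<and>
          smooth_on \<iota> (inv_into \<kappa> h) \<and> (\<forall>s\<in>\<kappa>. \<nu> s = \<mu> (h s)))"

text \<open>The causal curve represented by a path: its class of reparametrisations.\<close>
definition curve_of :: "real set \<Rightarrow> (real \<Rightarrow> 'p) \<Rightarrow> (real set \<times> (real \<Rightarrow> 'p)) set" where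
  "curve_of \<iota> \<mu> = {(\<kappa>, \<nu>). reparam \<kappa> \<nu> \<iota> \<mu>}"

definition fd_causal_curves where
  "fd_causal_curves A g T = {curve_of \<iota> \<mu> | \<iota> \<mu>. fd_causal_path A g T \<iota> \<mu>}"

definition causal_prec where
  "causal_prec A g T x y \<longleftrightarrow> x = y \<or>
     (\<exists>a b \<mu>. a < b \<and> fd_causal_path A g T {a..b} \<mu> \<and> \<mu> a = x \<and> \<mu> b = y)"

definition spacelike where
  "spacelike A g T S \<longleftrightarrow> (\<forall>x\<in>S. \<forall>y\<in>S. x \<noteq> y \<longrightarrow> \<not> causal_prec A g T x y)"

definition slice where
  "slice A g T S \<longleftrightarrow> closed S \<and> spacelike A g T S"

text \<open>C[P,Q]: future-directed causal curves passing through P and then Q.\<close>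
definition curves_through where
  "curves_through A g T P Q = {C \<in> fd_causal_curves A g T.
     \<forall>(\<iota>, \<mu>)\<in>C. (\<exists>q\<in>\<iota>. \<mu> q \<in> Q) \<and> (\<forall>q\<in>\<iota>. \<mu> q \<in> Q \<longrightarrow> (\<exists>p\<in>\<iota>. p \<le> q \<and> \<mu> p \<in> P))}"

definition Slice_hom where
  "Slice_hom A g T X Y = Pow (curves_through A g T X Y)"

definition Slice_comp :: "'c set \<Rightarrow> 'c set \<Rightarrow> 'c set" where
  "Slice_comp T' S = T' \<inter> S"

text \<open>Object part and morphism part of the presheaf (X \<or> Y)(-).\<close>
definition join_ob where
  "join_ob A g T X Y Z = Pow (curves_through A g T Z X \<union> curves_through A g T Z Y)"

definition join_map :: "'c set \<Rightarrow> 'c set \<Rightarrow> 'c set" where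
  "join_map U C = C \<inter> U"

definition represents where
  "represents A g T Fob Fmap R \<longleftrightarrow> slice A g T R \<and>
     (\<exists>\<eta>. (\<forall>Z. slice A g T Z \<longrightarrow> bij_betw (\<eta> Z) (Slice_hom A g T Z R) (Fob Z)) \<and>
          (\<forall>Z Z' U S. slice A g T Z \<longrightarrow> slice A g T Z' \<longrightarrow> U \<in> Slice_hom A g T Z' Z \<longrightarrow>
              S \<in> Slice_hom A g T Z R \<longrightarrow>
              \<eta> Z' (Slice_comp S U) = Fmap U (\<eta> Z S)))"

end

theory Submission
  imports Defs
begin

text \<open>The identity is a natural isomorphism from \<open>Slice(-, X \<union> Y)\<close> to \<open>(X \<or> Y)(-)\<close>
  once \<open>\<C>[Z, X \<union> Y] = \<C>[Z, X] \<union> \<C>[Z, Y]\<close>.  A curve through \<open>X \<union> Y\<close> either meets \<open>X\<close>,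
  and then every visit to \<open>X\<close> is a visit to \<open>X \<union> Y\<close>, or it only meets \<open>Y\<close>.  Conversely,
  any two points of a future-directed causal curve are causally related, because the
  restriction of a causal path to a compact parameter interval is again a causal path;
  hence a causal curve meets the spacelike set \<open>X \<union> Y\<close> in at most one point, and a curve
  through \<open>X\<close> visits \<open>X \<union> Y\<close> only in \<open>X\<close>.\<close>

lemma frechet_derivative_within_real:
  fixes f :: "real \<Rightarrow> 'b::real_normed_vector"
  assumes not_bot: "at x within S \<noteq> bot" and D: "(f has_derivative D) (at x within S)"
  shows "frechet_derivative f (at x within S) = D"
proof -
  have scale: "L = (\<lambda>h. h *\<^sub>R L 1)" if "linear L" for L :: "real \<Rightarrow> 'b"
    by (rule ext) (metis that linear_scale mult.right_neutral real_scaleR_def)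
  define D' where "D' = frechet_derivative f (at x within S)"
  have D': "(f has_derivative D') (at x within S)"
    unfolding D'_def using D frechet_derivative_works differentiableI by blast
  have "(f has_vector_derivative D' 1) (at x within S)"
    using D' scale[OF has_derivative_linear[OF D']] by (simp add: has_vector_derivative_def)
  moreover have "(f has_vector_derivative D 1) (at x within S)"
    using D scale[OF has_derivative_linear[OF D]] by (simp add: has_vector_derivative_def)
  ultimately have "D' 1 = D 1"
    by (rule vector_derivative_unique_within[OF not_bot])
  have "D' = (\<lambda>h. h *\<^sub>R D' 1)"
    using scale[OF has_derivative_linear[OF D']] .
  also have "\<dots> = D"
    using \<open>D' 1 = D 1\<close> scale[OF has_derivative_linear[OF D]] by simp
  finally show ?thesis
    unfolding D'_def .
qed

lemma dderiv_subset_eq: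
  fixes f :: "real \<Rightarrow> 'b::real_normed_vector"
  assumes sub: "S \<subseteq> S0" and not_bot: "\<And>x. x \<in> S \<Longrightarrow> at x within S \<noteq> bot"
    and smooth: "smooth_on S0 f" and x: "x \<in> S"
  shows "dderiv S vs f x = dderiv S0 vs f x"
  using x
proof (induction vs arbitrary: x)
  case Nil
  show ?case by simp
next
  case (Cons v vs)
  let ?D = "frechet_derivative (dderiv S0 vs f) (at x within S0)"
  have "(dderiv S0 vs f has_derivative ?D) (at x within S0)"
    using smooth Cons.prems sub frechet_derivative_works unfolding smooth_on_def by blast
  then have "(dderiv S0 vs f has_derivative ?D) (at x within S)"
    using has_derivative_subset sub by blast
  then have "(dderiv S vs f has_derivative ?D) (at x within S)"
    by (rule has_derivative_transform_within[where d=1]) (use Cons in auto)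
  then have "frechet_derivative (dderiv S vs f) (at x within S) = ?D"
    by (rule frechet_derivative_within_real[OF not_bot[OF Cons.prems]])
  then show ?case by simp
qed

lemma smooth_on_subset:
  fixes f :: "real \<Rightarrow> 'b::real_normed_vector"
  assumes sub: "S \<subseteq> S0" and not_bot: "\<And>x. x \<in> S \<Longrightarrow> at x within S \<noteq> bot"
    and smooth: "smooth_on S0 f"
  shows "smooth_on S f"
  unfolding smooth_on_def
proof (intro allI ballI)
  fix vs x assume x: "x \<in> S"
  have "dderiv S0 vs f differentiable (at x within S)"
    using smooth x sub differentiable_within_subset unfolding smooth_on_def by blast
  then show "dderiv S vs f differentiable (at x within S)"
    by (rule differentiable_transform_within[where d=1])
      (use x dderiv_subset_eq[OF sub not_bot smooth] in auto)
qed

lemma vector_derivative_within_subset: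
  assumes "f differentiable (at x within S0)" and "S \<subseteq> S0" and "at x within S \<noteq> bot"
  shows "vector_derivative f (at x within S) = vector_derivative f (at x within S0)"
  using assms vector_derivative_within has_vector_derivative_within_subset vector_derivative_works
  by blast

lemma at_within_openin_Icc_neq_bot:
  fixes a b x :: real
  assumes "a < b" and "openin (top_of_set {a..b}) S" and "x \<in> S"
  shows "at x within S \<noteq> bot"
proof -
  obtain V where V: "open V" "S = {a..b} \<inter> V"
    using assms(2) by (auto simp: openin_open)
  have "x islimpt {a..b}"
    using assms V by simp
  then have "x islimpt {a..b} \<inter> V"
    using V assms(3) by (intro islimpt_Int_eventually eventually_at_in_open') auto
  then show ?thesis
    using V by (simp add: trivial_limit_within)
qed

lemma smooth_atlas_open_domain:
  assumes "smooth_atlas A" and "c \<in> A"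
  shows "open (fst c)"
  using assms unfolding smooth_atlas_def by (cases c) auto

lemma fd_causal_path_restrict:
  assumes charts_open: "\<forall>c\<in>A. open (fst c)" and path: "fd_causal_path A g T \<iota> \<mu>"
    and "a < b" and "a \<in> \<iota>" and "b \<in> \<iota>"
  shows "fd_causal_path A g T {a..b} \<mu>"
proof -
  let ?S = "\<lambda>c. {t\<in>{a..b}. \<mu> t \<in> fst c}" and ?W = "\<lambda>c. {t\<in>\<iota>. \<mu> t \<in> fst c}"
  have interval: "is_interval \<iota>" and cont: "continuous_on \<iota> \<mu>"
    and smooth: "\<And>c. c \<in> A \<Longrightarrow> smooth_on (?W c) (snd c \<circ> \<mu>)"
    using path by (auto simp: fd_causal_path_def smooth_path_def)
  have sub: "{a..b} \<subseteq> \<iota>"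
    using mem_is_interval_1_I[OF interval \<open>a \<in> \<iota>\<close> \<open>b \<in> \<iota>\<close>] by auto
  have S_sub: "?S c \<subseteq> ?W c" for c
    using sub by auto
  have not_bot: "at t within ?S c \<noteq> bot" if "c \<in> A" "t \<in> ?S c" for c t
  proof -
    have "openin (top_of_set {a..b}) ({a..b} \<inter> \<mu> -` fst c)"
      using continuous_openin_preimage_gen continuous_on_subset[OF cont sub] charts_open that(1)
      by blast
    moreover have "{a..b} \<inter> \<mu> -` fst c = ?S c" by auto
    ultimately show ?thesis
      using at_within_openin_Icc_neq_bot \<open>a < b\<close> that(2) by metis
  qed
  have "smooth_path A {a..b} \<mu>"
    unfolding smooth_path_def
    using \<open>a < b\<close> continuous_on_subset[OF cont sub]
      smooth_on_subset[OF S_sub not_bot smooth] by auto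
  moreover have "velocity c {a..b} \<mu> t = velocity c \<iota> \<mu> t"
    if "c \<in> A" "t \<in> ?S c" for c t
  proof -
    have "t \<in> ?W c"
      using S_sub that(2) by blast
    then have "dderiv (?W c) [] (snd c \<circ> \<mu>) differentiable (at t within ?W c)"
      using smooth[OF that(1)] unfolding smooth_on_def by blast
    then show ?thesis
      unfolding velocity_def
      by (intro vector_derivative_within_subset[OF _ S_sub not_bot[OF that]]) simp
  qed
  moreover have "\<forall>t\<in>\<iota>. \<forall>c\<in>A. \<mu> t \<in> fst c \<longrightarrow>
      (let x = snd c (\<mu> t); v = velocity c \<iota> \<mu> t in
         v \<noteq> 0 \<and> g c x v v \<le> 0 \<and> g c x (T c x) v < 0)"
    using path unfolding fd_causal_path_def by blast
  ultimately show ?thesis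
    unfolding fd_causal_path_def using sub by (simp add: subset_iff)
qed

lemma image_curve_of:
  assumes "(\<kappa>, \<nu>) \<in> curve_of \<iota> \<mu>"
  shows "\<nu> ` \<kappa> = \<mu> ` \<iota>"
proof -
  obtain h where "bij_betw h \<kappa> \<iota>" and "\<forall>s\<in>\<kappa>. \<nu> s = \<mu> (h s)"
    using assms unfolding curve_of_def reparam_def by auto
  then show ?thesis
    by (metis bij_betw_imp_surj_on image_cong image_image)
qed

lemma curve_of_causal_prec:
  assumes "\<forall>c\<in>A. open (fst c)" and "fd_causal_path A g T \<iota> \<mu>"
    and "(\<kappa>, \<nu>) \<in> curve_of \<iota> \<mu>" and "s \<in> \<kappa>" and "s' \<in> \<kappa>" and "s < s'"
  shows "causal_prec A g T (\<nu> s) (\<nu> s')"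
proof -
  obtain h where h: "bij_betw h \<kappa> \<iota>" "strict_mono_on \<kappa> h" "\<forall>s\<in>\<kappa>. \<nu> s = \<mu> (h s)"
    using assms(3) unfolding curve_of_def reparam_def by auto
  have "h s < h s'" and "h s \<in> \<iota>" and "h s' \<in> \<iota>"
    using h assms(4-6) by (auto simp: strict_mono_on_def bij_betw_apply)
  then have "fd_causal_path A g T {h s..h s'} \<mu>"
    using fd_causal_path_restrict assms(1,2) by blast
  then show ?thesis
    unfolding causal_prec_def using \<open>h s < h s'\<close> h(3) assms(4,5) by metis
qed

lemma spacelike_curve_of_meets_once:
  assumes "\<forall>c\<in>A. open (fst c)" and "fd_causal_path A g T \<iota> \<mu>"
    and "(\<kappa>, \<nu>) \<in> curve_of \<iota> \<mu>" and "spacelike A g T S"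
    and "s \<in> \<kappa>" and "s' \<in> \<kappa>" and "\<nu> s \<in> S" and "\<nu> s' \<in> S"
  shows "\<nu> s = \<nu> s'"
  using curve_of_causal_prec[OF assms(1-3)] assms(4-8) unfolding spacelike_def
  by (metis linorder_neqE_linordered_idom)

definition passes_through :: "'p set \<Rightarrow> 'p set \<Rightarrow> real set \<Rightarrow> (real \<Rightarrow> 'p) \<Rightarrow> bool" where
  "passes_through P Q \<kappa> \<nu> \<longleftrightarrow>
     (\<exists>q\<in>\<kappa>. \<nu> q \<in> Q) \<and> (\<forall>q\<in>\<kappa>. \<nu> q \<in> Q \<longrightarrow> (\<exists>p\<in>\<kappa>. p \<le> q \<and> \<nu> p \<in> P))"

lemma curves_through_iff:
  "C \<in> curves_through A g T P Q \<longleftrightarrow>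
     C \<in> fd_causal_curves A g T \<and> (\<forall>(\<kappa>, \<nu>)\<in>C. passes_through P Q \<kappa> \<nu>)"
  unfolding curves_through_def passes_through_def by blast

lemma curves_through_Un_subset:
  "curves_through A g T Z (Q \<union> Q') \<subseteq> curves_through A g T Z Q \<union> curves_through A g T Z Q'"
proof
  fix C assume "C \<in> curves_through A g T Z (Q \<union> Q')"
  then have curve: "C \<in> fd_causal_curves A g T"
    and passes: "\<And>\<kappa> \<nu>. (\<kappa>, \<nu>) \<in> C \<Longrightarrow> passes_through Z (Q \<union> Q') \<kappa> \<nu>"
    unfolding curves_through_iff by auto
  then obtain \<iota> \<mu> where C_def: "C = curve_of \<iota> \<mu>"
    unfolding fd_causal_curves_def by blast
  have image: "\<nu> ` \<kappa> = \<mu> ` \<iota>" if "(\<kappa>, \<nu>) \<in> C" for \<kappa> \<nu>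
    using image_curve_of that unfolding C_def .
  show "C \<in> curves_through A g T Z Q \<union> curves_through A g T Z Q'"
  proof (cases "\<mu> ` \<iota> \<inter> Q = {}")
    case False
    have "passes_through Z Q \<kappa> \<nu>" if "(\<kappa>, \<nu>) \<in> C" for \<kappa> \<nu>
    proof -
      have "\<nu> ` \<kappa> \<inter> Q \<noteq> {}"
        using False image[OF that] by simp
      then show ?thesis
        using passes[OF that] unfolding passes_through_def by blast
    qed
    then show ?thesis
      using curve by (auto simp: curves_through_iff)
  next
    case True
    have "passes_through Z Q' \<kappa> \<nu>" if "(\<kappa>, \<nu>) \<in> C" for \<kappa> \<nu>
    proof -
      have "\<nu> ` \<kappa> \<inter> Q = {}"
        using True image[OF that] by simp
      then show ?thesis
        using passes[OF that] unfolding passes_through_def by blast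
    qed
    then show ?thesis
      using curve by (auto simp: curves_through_iff)
  qed
qed

lemma curves_through_subset_Un:
  assumes charts_open: "\<forall>c\<in>A. open (fst c)" and spacelike: "spacelike A g T (Q \<union> Q')"
  shows "curves_through A g T Z Q \<subseteq> curves_through A g T Z (Q \<union> Q')"
proof
  fix C assume "C \<in> curves_through A g T Z Q"
  then have curve: "C \<in> fd_causal_curves A g T"
    and passes: "\<And>\<kappa> \<nu>. (\<kappa>, \<nu>) \<in> C \<Longrightarrow> passes_through Z Q \<kappa> \<nu>"
    unfolding curves_through_iff by auto
  then obtain \<iota> \<mu> where C_def: "C = curve_of \<iota> \<mu>" and path: "fd_causal_path A g T \<iota> \<mu>"
    unfolding fd_causal_curves_def by blast
  have "passes_through Z (Q \<union> Q') \<kappa> \<nu>" if rep: "(\<kappa>, \<nu>) \<in> C" for \<kappa> \<nu>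
  proof -
    obtain q' where "q' \<in> \<kappa>" "\<nu> q' \<in> Q"
      using passes[OF rep] unfolding passes_through_def by blast
    then have "\<nu> q = \<nu> q'" if "q \<in> \<kappa>" "\<nu> q \<in> Q \<union> Q'" for q
      using spacelike_curve_of_meets_once[OF charts_open path _ spacelike] that rep
      unfolding C_def by blast
    with \<open>\<nu> q' \<in> Q\<close> show ?thesis
      using passes[OF rep] unfolding passes_through_def by (metis UnCI)
  qed
  then show "C \<in> curves_through A g T Z (Q \<union> Q')"
    using curve by (auto simp: curves_through_iff)
qed

lemma curves_through_Un:
  assumes "\<forall>c\<in>A. open (fst c)" and "spacelike A g T (Q \<union> Q')"
  shows "curves_through A g T Z (Q \<union> Q') = curves_through A g T Z Q \<union> curves_through A g T Z Q'"
proof (rule subset_antisym)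
  have "spacelike A g T (Q' \<union> Q)"
    using assms(2) by (simp add: Un_commute)
  from curves_through_subset_Un[OF assms(1) this]
  have "curves_through A g T Z Q' \<subseteq> curves_through A g T Z (Q \<union> Q')"
    by (simp only: Un_commute)
  then show "curves_through A g T Z Q \<union> curves_through A g T Z Q' \<subseteq> curves_through A g T Z (Q \<union> Q')"
    using curves_through_subset_Un[OF assms] by (rule Un_least[rotated])
qed (rule curves_through_Un_subset)

theorem mainTheorem13:
  fixes A :: "('p::{t2_space, second_countable_topology}, 'n::finite) chart set"
    and g :: "('p, 'n) chart \<Rightarrow> real ^ 'n \<Rightarrow> real ^ 'n \<Rightarrow> real ^ 'n \<Rightarrow> real"
    and T :: "('p, 'n) chart \<Rightarrow> real ^ 'n \<Rightarrow> real ^ 'n"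
    and X Y :: "'p set"
  assumes "time_oriented_lorentzian A g T"
    and "slice A g T X" and "slice A g T Y"
    and "spacelike A g T (X \<union> Y)"
  shows "represents A g T (join_ob A g T X Y) join_map (X \<union> Y)"
proof -
  have "smooth_atlas A"
    using assms(1) unfolding time_oriented_lorentzian_def by blast
  then have charts_open: "\<forall>c\<in>A. open (fst c)"
    using smooth_atlas_open_domain by blast
  have "slice A g T (X \<union> Y)"
    using assms(2-4) unfolding slice_def by blast
  moreover have "Slice_hom A g T Z (X \<union> Y) = join_ob A g T X Y Z" for Z
    unfolding Slice_hom_def join_ob_def curves_through_Un[OF charts_open assms(4)] ..
  ultimately show ?thesis
    unfolding represents_def Slice_comp_def join_map_def
    by (intro conjI exI[of _ "\<lambda>Z S. S"]) (simp_all add: bij_betw_id[unfolded id_def])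
qed

end
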